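(* Let $k\ge 1$ and let $\mathcal{H}_k=(V_k,\mathcal{E}_k)$ be a $k$-uniform hypergraph that has no proper $2$-coloring. Let $D_k$ be the directed graph with vertex set $V_k\cup U_k\cup\{s\}$, where $U_k=\{u_E: E\in\mathcal{E}_k\}$ is a set of new vertices, one for each hyperedge, and $s$ is a new vertex, and whose arcs are $sv$ for every $v\in V_k$ and $vu_E$ for every $v\in V_k$ and $E\in\mathcal{E}_k$ with $v\in E$. Then $D_k$ is acyclic, every $u\in U_k$ satisfies $\lambda_{D_k}(s,u)=k$, and $D_k$ contains no two arc-disjoint $(s,U_k)$-arborescences.
   Context: A hypergraph $(V,\mathcal{E})$ is $k$-uniform if every hyperedge has exactly $k$ vertices; a $2$-coloring of $V$ is proper if no hyperedge is monochromatic. $\lambda_D(s,v)$ is the maximum number of arc-disjoint directed $(s,v)$-paths in $D$. An $s$-arborescence is an acyclic subgraph $F=(V'\cup\{s\},A')$ in which every vertex of $V'$ has in-degree exactly $1$; it is an $(s,U)$-arborescence if it contains all vertices of $U$. *)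

theory Defs
  imports Main
begin

definition hypergraph :: "'a set \<Rightarrow> 'a set set \<Rightarrow> bool" where
  "hypergraph V Es \<longleftrightarrow> finite V \<and> (\<forall>E\<in>Es. E \<subseteq> V)"

definition k_uniform :: "nat \<Rightarrow> 'a set set \<Rightarrow> bool" where
  "k_uniform k Es \<longleftrightarrow> (\<forall>E\<in>Es. card E = k)"

definition proper_2_coloring :: "'a set set \<Rightarrow> ('a \<Rightarrow> bool) \<Rightarrow> bool" where
  "proper_2_coloring Es c \<longleftrightarrow> (\<forall>E\<in>Es. \<not> (\<exists>b. \<forall>x\<in>E. c x = b))"

datatype 'a dnode = Src | VNode 'a | UNode "'a set"

definition Dk_verts :: "'a set \<Rightarrow> 'a set set \<Rightarrow> 'a dnode set" where
  "Dk_verts V Es = insert Src (VNode ` V \<union> UNode ` Es)"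

definition Dk_arcs :: "'a set \<Rightarrow> 'a set set \<Rightarrow> ('a dnode \<times> 'a dnode) set" where
  "Dk_arcs V Es = {(Src, VNode v) | v. v \<in> V} \<union> {(VNode v, UNode E) | v E. v \<in> V \<and> E \<in> Es \<and> v \<in> E}"

definition path_arcs :: "'b list \<Rightarrow> ('b \<times> 'b) set" where
  "path_arcs p = set (zip p (tl p))"

definition is_path :: "('b \<times> 'b) set \<Rightarrow> 'b \<Rightarrow> 'b \<Rightarrow> 'b list \<Rightarrow> bool" where
  "is_path A s v p \<longleftrightarrow> p \<noteq> [] \<and> hd p = s \<and> last p = v \<and> distinct p \<and> path_arcs p \<subseteq> A"

definition lambda :: "('b \<times> 'b) set \<Rightarrow> 'b \<Rightarrow> 'b \<Rightarrow> nat" where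
  "lambda A s v = (GREATEST n. \<exists>P :: nat \<Rightarrow> 'b list.
      (\<forall>i<n. is_path A s v (P i)) \<and>
      (\<forall>i<n. \<forall>j<n. i \<noteq> j \<longrightarrow> path_arcs (P i) \<inter> path_arcs (P j) = {}))"

definition s_arborescence :: "'b set \<Rightarrow> ('b \<times> 'b) set \<Rightarrow> 'b \<Rightarrow> 'b set \<Rightarrow> ('b \<times> 'b) set \<Rightarrow> bool" where
  "s_arborescence VD AD s V' A' \<longleftrightarrow>
     s \<notin> V' \<and> V' \<subseteq> VD \<and> A' \<subseteq> AD \<and> A' \<subseteq> insert s V' \<times> insert s V' \<and>
     acyclic A' \<and> (\<forall>v\<in>V'. card {a \<in> A'. snd a = v} = 1)"

definition sU_arborescence :: "'b set \<Rightarrow> ('b \<times> 'b) set \<Rightarrow> 'b \<Rightarrow> 'b set \<Rightarrow> 'b set \<Rightarrow> ('b \<times> 'b) set \<Rightarrow> bool" where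
  "sU_arborescence VD AD s U V' A' \<longleftrightarrow> s_arborescence VD AD s V' A' \<and> U \<subseteq> insert s V'"

end

theory Submission
  imports Defs
begin

(* Every (s, u_E)-path in D_k is s v u_E with v \<in> E, so arc-disjoint (s, u_E)-paths correspond
   to distinct vertices of E and \<lambda>(s, u_E) = |E| = k.  An (s, U)-arborescence must reach each
   u_E through some v \<in> E, and v only from s, so it contains an arc s v with v \<in> E.  Given two
   arc-disjoint (s, U)-arborescences A1, A2, colour v by whether s v \<in> A1: every hyperedge
   contains a vertex whose arc lies in A1 and one whose arc lies in A2, hence is not monochromatic. *)

lemma acyclic_Dk_arcs: "acyclic (Dk_arcs V Es)"
proof -
  define level :: "'a dnode \<Rightarrow> nat"
    where "level x = (case x of Src \<Rightarrow> 0 | VNode _ \<Rightarrow> 1 | UNode _ \<Rightarrow> 2)" for x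
  have "Dk_arcs V Es \<subseteq> inv_image less_than level"
    by (auto simp: Dk_arcs_def level_def)
  then show ?thesis
    using acyclic_subset wf_acyclic wf_inv_image wf_less_than by blast
qed

lemma is_path_Dk_arcs_UNode_iff:
  "is_path (Dk_arcs V Es) Src (UNode E) p \<longleftrightarrow>
     (\<exists>v\<in>V. v \<in> E \<and> E \<in> Es \<and> p = [Src, VNode v, UNode E])"
proof
  assume p: "is_path (Dk_arcs V Es) Src (UNode E) p"
  then obtain q where q: "p = Src # q" "q \<noteq> []"
    by (cases p) (auto simp: is_path_def split: if_splits)
  then obtain v q' where "q = VNode v # q'" "v \<in> V"
    using p by (cases q) (auto simp: is_path_def path_arcs_def Dk_arcs_def)
  moreover from this obtain E' q'' where "q' = UNode E' # q''" "v \<in> E'" "E' \<in> Es"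
    using p q by (cases q') (auto simp: is_path_def path_arcs_def Dk_arcs_def)
  moreover from this have "q'' = []"
    using p q \<open>q = VNode v # q'\<close> by (cases q'') (auto simp: is_path_def path_arcs_def Dk_arcs_def)
  ultimately show "\<exists>v\<in>V. v \<in> E \<and> E \<in> Es \<and> p = [Src, VNode v, UNode E]"
    using p q by (auto simp: is_path_def)
next
  assume "\<exists>v\<in>V. v \<in> E \<and> E \<in> Es \<and> p = [Src, VNode v, UNode E]"
  then show "is_path (Dk_arcs V Es) Src (UNode E) p"
    by (auto simp: is_path_def path_arcs_def Dk_arcs_def)
qed

lemma lambda_Dk_arcs_UNode:
  assumes "hypergraph V Es" and E: "E \<in> Es"
  shows "lambda (Dk_arcs V Es) Src (UNode E) = card E"
proof -
  have "E \<subseteq> V" and fin: "finite E"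
    using assms by (auto simp: hypergraph_def intro: finite_subset)
  let ?disjoint_paths = "\<lambda>n. \<exists>P :: nat \<Rightarrow> 'a dnode list.
      (\<forall>i<n. is_path (Dk_arcs V Es) Src (UNode E) (P i)) \<and>
      (\<forall>i<n. \<forall>j<n. i \<noteq> j \<longrightarrow> path_arcs (P i) \<inter> path_arcs (P j) = {})"
  have "?disjoint_paths (card E)"
  proof -
    obtain h where h: "bij_betw h {0..<card E} E"
      using ex_bij_betw_nat_finite[OF fin] by blast
    define P where "P i = [Src, VNode (h i), UNode E]" for i
    have "\<forall>i<card E. is_path (Dk_arcs V Es) Src (UNode E) (P i)"
    proof (intro allI impI)
      fix i assume "i < card E"
      then have "h i \<in> E" using h by (auto dest: bij_betwE)
      then show "is_path (Dk_arcs V Es) Src (UNode E) (P i)"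
        using \<open>E \<subseteq> V\<close> E by (auto simp: P_def is_path_Dk_arcs_UNode_iff)
    qed
    moreover have "path_arcs (P i) \<inter> path_arcs (P j) = {}"
      if "i < card E" "j < card E" "i \<noteq> j" for i j
    proof -
      have "h i \<noteq> h j" using h that by (auto simp: bij_betw_def inj_on_def)
      then show ?thesis by (auto simp: P_def path_arcs_def)
    qed
    ultimately show ?thesis by blast
  qed
  moreover have "n \<le> card E" if "?disjoint_paths n" for n
  proof -
    from that obtain P where paths: "\<forall>i<n. is_path (Dk_arcs V Es) Src (UNode E) (P i)"
      and disjoint: "\<forall>i<n. \<forall>j<n. i \<noteq> j \<longrightarrow> path_arcs (P i) \<inter> path_arcs (P j) = {}"
      by blast
    have "\<forall>i<n. \<exists>v. v \<in> E \<and> P i = [Src, VNode v, UNode E]"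
      using paths by (simp add: is_path_Dk_arcs_UNode_iff) blast
    then obtain g where g: "\<forall>i<n. g i \<in> E \<and> P i = [Src, VNode (g i), UNode E]"
      by metis
    have "inj_on g {..<n}"
    proof (rule inj_onI)
      fix i j assume ij: "i \<in> {..<n}" "j \<in> {..<n}" and "g i = g j"
      then have "(Src, VNode (g i)) \<in> path_arcs (P i) \<inter> path_arcs (P j)"
        using g by (simp add: path_arcs_def)
      then show "i = j" using disjoint ij by blast
    qed
    moreover have "g ` {..<n} \<subseteq> E" using g by auto
    ultimately have "card {..<n} \<le> card E" using card_inj_on_le fin by blast
    then show ?thesis by simp
  qed
  ultimately show ?thesis
    unfolding lambda_def by (rule Greatest_equality)
qed

lemma card_in_arcs_eq_1_obtains:
  assumes "card {a \<in> A. snd a = v} = 1"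
  obtains x where "(x, v) \<in> A"
  using assms by (metis (mono_tags, lifting) card_1_singletonE mem_Collect_eq
      prod.collapse singletonI)

lemma sU_arborescence_Dk_contains_Src_arc:
  assumes "sU_arborescence (Dk_verts V Es) (Dk_arcs V Es) Src (UNode ` Es) V' A'"
    and E: "E \<in> Es"
  shows "\<exists>v\<in>E. (Src, VNode v) \<in> A'"
proof -
  have arcs: "A' \<subseteq> Dk_arcs V Es" and closed: "A' \<subseteq> insert Src V' \<times> insert Src V'"
    and "UNode E \<in> V'" and in_degree: "\<forall>v\<in>V'. card {a \<in> A'. snd a = v} = 1"
    using assms unfolding sU_arborescence_def s_arborescence_def by (blast, blast, blast, blast)
  obtain x where x: "(x, UNode E) \<in> A'"
    using card_in_arcs_eq_1_obtains[of A' "UNode E"] in_degree \<open>UNode E \<in> V'\<close> by blast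
  then have "(x, UNode E) \<in> Dk_arcs V Es" using arcs by blast
  then obtain v where "x = VNode v" "v \<in> E" unfolding Dk_arcs_def by blast
  with x have v: "v \<in> E" "(VNode v, UNode E) \<in> A'" by auto
  then have "VNode v \<in> V'" using closed by auto
  then obtain y where y: "(y, VNode v) \<in> A'"
    using card_in_arcs_eq_1_obtains[of A' "VNode v"] in_degree by blast
  then have "(y, VNode v) \<in> Dk_arcs V Es" using arcs by blast
  then have "y = Src" unfolding Dk_arcs_def by blast
  then show ?thesis using v y by blast
qed

lemma two_disjoint_sU_arborescences_Dk_imp_proper_2_coloring:
  assumes "sU_arborescence (Dk_verts V Es) (Dk_arcs V Es) Src (UNode ` Es) V1 A1"
    and "sU_arborescence (Dk_verts V Es) (Dk_arcs V Es) Src (UNode ` Es) V2 A2"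
    and "A1 \<inter> A2 = {}"
  shows "proper_2_coloring Es (\<lambda>v. (Src, VNode v) \<in> A1)"
  unfolding proper_2_coloring_def
proof (intro ballI notI)
  fix E assume "E \<in> Es" and "\<exists>b. \<forall>x\<in>E. ((Src, VNode x) \<in> A1) = b"
  moreover obtain v1 where "v1 \<in> E" "(Src, VNode v1) \<in> A1"
    using sU_arborescence_Dk_contains_Src_arc[OF assms(1) \<open>E \<in> Es\<close>] by blast
  moreover obtain v2 where "v2 \<in> E" "(Src, VNode v2) \<in> A2"
    using sU_arborescence_Dk_contains_Src_arc[OF assms(2) \<open>E \<in> Es\<close>] by blast
  ultimately show False using assms(3) by blast
qed

theorem theorem10:
  fixes k :: nat and V :: "'a set" and Es :: "'a set set"
  assumes "k \<ge> 1"
    and "hypergraph V Es"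
    and "k_uniform k Es"
    and "\<not> (\<exists>c. proper_2_coloring Es c)"
  shows "acyclic (Dk_arcs V Es)
    \<and> (\<forall>u \<in> UNode ` Es. lambda (Dk_arcs V Es) Src u = k)
    \<and> \<not> (\<exists>V1 A1 V2 A2.
            sU_arborescence (Dk_verts V Es) (Dk_arcs V Es) Src (UNode ` Es) V1 A1 \<and>
            sU_arborescence (Dk_verts V Es) (Dk_arcs V Es) Src (UNode ` Es) V2 A2 \<and>
            A1 \<inter> A2 = {})"
proof (intro conjI)
  show "acyclic (Dk_arcs V Es)" by (rule acyclic_Dk_arcs)
  show "\<forall>u \<in> UNode ` Es. lambda (Dk_arcs V Es) Src u = k"
    using lambda_Dk_arcs_UNode[OF assms(2)] assms(3) by (auto simp: k_uniform_def)
  show "\<not> (\<exists>V1 A1 V2 A2.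
            sU_arborescence (Dk_verts V Es) (Dk_arcs V Es) Src (UNode ` Es) V1 A1 \<and>
            sU_arborescence (Dk_verts V Es) (Dk_arcs V Es) Src (UNode ` Es) V2 A2 \<and>
            A1 \<inter> A2 = {})"
    using two_disjoint_sU_arborescences_Dk_imp_proper_2_coloring[of V Es] assms(4) by blast
qed

end
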